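(* Let $\Bbbk$ be a field of characteristic $0$, $n\ge3$, and let $(A,\mu,(\alpha_1,\ldots,\alpha_{n-1}))$ be an $n$-ary totally Hom-associative algebra over $\Bbbk$, with $\mu(x_1,\ldots,x_n)=(x_1\cdots x_n)$. Suppose $a\in A$ satisfies (1) $\alpha_{n-1}(a)=a$, and (2) $(x_1,\ldots,x_{n-1},a)=(x_1,\ldots,x_{n-2},a,x_{n-1})$ for all $x_i\in A$. Define the $(n-1)$-ary product $(x_1,\ldots,x_{n-1})'=(x_1,\ldots,x_{n-1},a)$. Then $A_1=(A,(\cdot)',(\alpha_1,\ldots,\alpha_{n-2}))$ is an $(n-1)$-ary totally Hom-associative algebra. Moreover, if $A$ is multiplicative, then so is $A_1$.
   Context: An $m$-ary Hom-algebra $(V,\mu,(\alpha_1,\ldots,\alpha_{m-1}))$ is a vector space $V$ with an $m$-linear map $\mu$ (written $\mu(a_1,\ldots,a_m)=(a_1\cdots a_m)$) and linear maps $\alpha_i\colon V\to V$. It is multiplicative if all $\alpha_i$ equal one map $\alpha$ and $\alpha\circ\mu=\mu\circ\alpha^{\otimes m}$. It is $m$-ary totally Hom-associative if for every $i\in\{1,\ldots,m-1\}$ and all $a_1,\ldots,a_{2m-1}$: $(\alpha_1(a_1),\ldots,\alpha_{i-1}(a_{i-1}),(a_i\cdots a_{i+m-1}),\alpha_i(a_{i+m}),\ldots,\alpha_{m-1}(a_{2m-1}))=(\alpha_1(a_1),\ldots,\alpha_i(a_i),(a_{i+1}\cdots a_{i+m}),\alpha_{i+1}(a_{i+m+1}),\ldots,\alpha_{m-1}(a_{2m-1}))$.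 *)

theory Defs
  imports Main "HOL.Vector_Spaces"
begin

text \<open>An m-ary product on 'a is modelled as a function on lists, only its values on
  lists of length m matter. The structure maps alpha_1..alpha_{m-1} are given by
  alpha :: nat => 'a => 'a, only indices 1..m-1 matter.\<close>

definition multilinear :: "('k::field \<Rightarrow> 'a::ab_group_add \<Rightarrow> 'a) \<Rightarrow> nat \<Rightarrow> ('a list \<Rightarrow> 'a) \<Rightarrow> bool" where
  "multilinear scale m mu \<longleftrightarrow>
     (\<forall>xs. length xs = m \<longrightarrow> (\<forall>i<m. Vector_Spaces.linear scale scale (\<lambda>x. mu (xs[i := x]))))"

definition hom_algebra :: "('k::field \<Rightarrow> 'a::ab_group_add \<Rightarrow> 'a) \<Rightarrow> nat \<Rightarrow> ('a list \<Rightarrow> 'a) \<Rightarrow> (nat \<Rightarrow> 'a \<Rightarrow> 'a) \<Rightarrow> bool" where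
  "hom_algebra scale m mu alpha \<longleftrightarrow>
     vector_space scale \<and> multilinear scale m mu \<and>
     (\<forall>j\<in>{1..m-1}. Vector_Spaces.linear scale scale (alpha j))"

text \<open>Total Hom-associativity; the list xs of length 2m-1 is (a_1,...,a_{2m-1}), a_j = xs!(j-1).\<close>
definition totally_hom_assoc :: "nat \<Rightarrow> ('a list \<Rightarrow> 'a) \<Rightarrow> (nat \<Rightarrow> 'a \<Rightarrow> 'a) \<Rightarrow> bool" where
  "totally_hom_assoc m mu alpha \<longleftrightarrow>
     (\<forall>i\<in>{1..m-1}. \<forall>xs. length xs = 2*m - 1 \<longrightarrow>
        mu ([alpha j (xs!(j-1)). j \<leftarrow> [1..<i]] @ [mu (take m (drop (i-1) xs))]
            @ [alpha j (xs!(j+m-1)). j \<leftarrow> [i..<m]])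
      = mu ([alpha j (xs!(j-1)). j \<leftarrow> [1..<i+1]] @ [mu (take m (drop i xs))]
            @ [alpha j (xs!(j+m-1)). j \<leftarrow> [i+1..<m]]))"

definition totally_hom_assoc_algebra :: "('k::field \<Rightarrow> 'a::ab_group_add \<Rightarrow> 'a) \<Rightarrow> nat \<Rightarrow> ('a list \<Rightarrow> 'a) \<Rightarrow> (nat \<Rightarrow> 'a \<Rightarrow> 'a) \<Rightarrow> bool" where
  "totally_hom_assoc_algebra scale m mu alpha \<longleftrightarrow>
     hom_algebra scale m mu alpha \<and> totally_hom_assoc m mu alpha"

definition multiplicative :: "nat \<Rightarrow> ('a list \<Rightarrow> 'a) \<Rightarrow> (nat \<Rightarrow> 'a \<Rightarrow> 'a) \<Rightarrow> bool" where
  "multiplicative m mu alpha \<longleftrightarrow>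
     (\<exists>f. (\<forall>j\<in>{1..m-1}. alpha j = f) \<and> (\<forall>xs. length xs = m \<longrightarrow> f (mu xs) = mu (map f xs)))"

end

theory Submission
  imports Defs
begin

text \<open>To prove the i-th (n-1)-ary identity for a word x of length 2n-3, insert a into x right
  after the inner bracket x_i ... x_{i+n-2} and append a at the end. The i-th and (i+1)-st n-ary
  bracketings of the padded word are then exactly the i-th and (i+1)-st bracketings of x for the
  new product: the trailing a sits under alpha_{n-1}, which fixes it, and the second inner
  bracket, which ends in a, x_{i+n-1} instead of x_{i+n-1}, a, is repaired by hypothesis (2).\<close>

definition hom_bracket :: "nat \<Rightarrow> ('a list \<Rightarrow> 'a) \<Rightarrow> (nat \<Rightarrow> 'a \<Rightarrow> 'a) \<Rightarrow> 'a list \<Rightarrow> nat \<Rightarrow> 'a" where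
  "hom_bracket m mu alpha xs i =
     mu ([alpha j (xs!(j-1)). j \<leftarrow> [1..<i]] @ [mu (take m (drop (i-1) xs))]
         @ [alpha j (xs!(j+m-1)). j \<leftarrow> [i..<m]])"

lemma totally_hom_assoc_iff_hom_bracket:
  "totally_hom_assoc m mu alpha \<longleftrightarrow>
     (\<forall>i\<in>{1..m-1}. \<forall>xs. length xs = 2*m - 1 \<longrightarrow>
        hom_bracket m mu alpha xs i = hom_bracket m mu alpha xs (Suc i))"
  unfolding totally_hom_assoc_def hom_bracket_def by simp

lemma hom_bracket_padded:
  fixes mu :: "'a list \<Rightarrow> 'a"
  assumes fix_a: "alpha (Suc k) a = a" and len: "length xs = 2*k + 1"
    and p: "p \<le> Suc k" "p \<le> Suc q" "q \<le> p + k"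
    and inner: "mu (take (Suc (Suc k)) (drop (p-1) (take q xs @ a # drop q xs @ [a])))
              = mu (take (Suc k) (drop (p-1) xs) @ [a])"
  shows "hom_bracket (Suc (Suc k)) mu alpha (take q xs @ a # drop q xs @ [a]) p
       = hom_bracket (Suc k) (\<lambda>zs. mu (zs @ [a])) alpha xs p"
proof -
  define ys where "ys = take q xs @ a # drop q xs @ [a]"
  have prefix: "[alpha j (ys!(j-1)). j \<leftarrow> [1..<p]] = [alpha j (xs!(j-1)). j \<leftarrow> [1..<p]]"
    using p len by (intro map_cong refl) (auto simp: ys_def nth_append)
  have shifted: "ys ! (j+k+1) = xs ! (j+k)" if "p \<le> j" "j \<le> k" for j
    using that p len by (auto simp: ys_def nth_append)
  have suffix: "[alpha j (ys!(j + Suc (Suc k) - 1)). j \<leftarrow> [p..<Suc (Suc k)]]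
      = [alpha j (xs!(j + Suc k - 1)). j \<leftarrow> [p..<Suc k]] @ [a]"
  proof -
    have "ys ! (2*k + 2) = a" using p len by (simp add: ys_def nth_append)
    then have "alpha (Suc k) (ys ! (Suc k + Suc (Suc k) - 1)) = a"
      using fix_a by (simp add: mult_2)
    moreover have "[alpha j (ys!(j + Suc (Suc k) - 1)). j \<leftarrow> [p..<Suc k]]
        = [alpha j (xs!(j + Suc k - 1)). j \<leftarrow> [p..<Suc k]]"
      using shifted by (intro map_cong refl) auto
    ultimately show ?thesis using p by simp
  qed
  show ?thesis
    using inner unfolding ys_def[symmetric] hom_bracket_def prefix suffix by simp
qed

lemma totally_hom_assoc_append_fixed:
  fixes mu :: "'a list \<Rightarrow> 'a"
  assumes assoc: "totally_hom_assoc (Suc (Suc k)) mu alpha"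
    and fix_a: "alpha (Suc k) a = a"
    and swap: "\<forall>zs y. length zs = k \<longrightarrow> mu (zs @ [y, a]) = mu (zs @ [a, y])"
  shows "totally_hom_assoc (Suc k) (\<lambda>zs. mu (zs @ [a])) alpha"
  unfolding totally_hom_assoc_iff_hom_bracket
proof (intro ballI allI impI)
  fix i and xs :: "'a list"
  assume "i \<in> {1..Suc k - 1}" and "length xs = 2 * Suc k - 1"
  then have i: "1 \<le> i" "i \<le> k" and len: "length xs = 2*k + 1" by auto
  define ys where "ys = take (i+k) xs @ a # drop (i+k) xs @ [a]"
  have "hom_bracket (Suc (Suc k)) mu alpha ys i = hom_bracket (Suc (Suc k)) mu alpha ys (Suc i)"
    using assoc i len unfolding totally_hom_assoc_iff_hom_bracket by (simp add: ys_def)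
  moreover have "hom_bracket (Suc (Suc k)) mu alpha ys i
      = hom_bracket (Suc k) (\<lambda>zs. mu (zs @ [a])) alpha xs i"
    unfolding ys_def
  proof (intro hom_bracket_padded fix_a)
    show "mu (take (Suc (Suc k)) (drop (i - 1) (take (i+k) xs @ a # drop (i+k) xs @ [a])))
        = mu (take (Suc k) (drop (i - 1) xs) @ [a])"
      using i len by (simp add: take_drop min_def add.commute)
  qed (use i len in auto)
  moreover have "hom_bracket (Suc (Suc k)) mu alpha ys (Suc i)
      = hom_bracket (Suc k) (\<lambda>zs. mu (zs @ [a])) alpha xs (Suc i)"
    unfolding ys_def
  proof (intro hom_bracket_padded fix_a)
    define zs where "zs = drop i (take (i+k) xs)"
    have "take (Suc (Suc k)) (drop (Suc i - 1) (take (i+k) xs @ a # drop (i+k) xs @ [a]))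
        = zs @ [a, xs!(i+k)]"
      using i len
      by (simp add: zs_def take_drop min_def hd_drop_conv_nth take_Suc_conv_app_nth)
    moreover have "take (Suc k) (drop (Suc i - 1) xs) = zs @ [xs!(i+k)]"
      using i len by (simp add: zs_def take_drop take_Suc_conv_app_nth add.commute)
    moreover have "length zs = k" using i len by (simp add: zs_def)
    ultimately show "mu (take (Suc (Suc k)) (drop (Suc i - 1) (take (i+k) xs @ a # drop (i+k) xs @ [a])))
        = mu (take (Suc k) (drop (Suc i - 1) xs) @ [a])"
      using swap by simp
  qed (use i len in auto)
  ultimately show "hom_bracket (Suc k) (\<lambda>zs. mu (zs @ [a])) alpha xs i
      = hom_bracket (Suc k) (\<lambda>zs. mu (zs @ [a])) alpha xs (Suc i)"
    by simp
qed

lemma multilinear_append_const: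
  fixes scale :: "'k::field \<Rightarrow> 'a::ab_group_add \<Rightarrow> 'a" and mu :: "'a list \<Rightarrow> 'a"
  assumes "multilinear scale (Suc m) mu"
  shows "multilinear scale m (\<lambda>xs. mu (xs @ [a]))"
  unfolding multilinear_def
proof (intro allI impI)
  fix xs :: "'a list" and i assume len: "length xs = m" and i: "i < m"
  have "Vector_Spaces.linear scale scale (\<lambda>x. mu ((xs @ [a])[i := x]))"
    using assms len i unfolding multilinear_def by simp
  then show "Vector_Spaces.linear scale scale (\<lambda>x. mu (xs[i := x] @ [a]))"
    using len i by (simp add: list_update_append1)
qed

lemma hom_algebra_append_const:
  fixes scale :: "'k::field \<Rightarrow> 'a::ab_group_add \<Rightarrow> 'a" and mu :: "'a list \<Rightarrow> 'a"
  assumes "hom_algebra scale (Suc m) mu alpha"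
  shows "hom_algebra scale m (\<lambda>xs. mu (xs @ [a])) alpha"
  using assms multilinear_append_const unfolding hom_algebra_def by fastforce

lemma multiplicative_append_fixed:
  assumes mult: "multiplicative (Suc m) mu alpha" and "0 < m" and fix_a: "alpha m a = a"
  shows "multiplicative m (\<lambda>xs. mu (xs @ [a])) alpha"
proof -
  obtain f where f: "\<forall>j\<in>{1..m}. alpha j = f"
    and hom: "\<forall>xs. length xs = Suc m \<longrightarrow> f (mu xs) = mu (map f xs)"
    using mult unfolding multiplicative_def by auto
  have "f a = a" using f fix_a \<open>0 < m\<close> by auto
  then have "\<forall>xs. length xs = m \<longrightarrow> f (mu (xs @ [a])) = mu (map f xs @ [a])"
    using hom by simp
  then show ?thesis using f unfolding multiplicative_def by (intro exI[of _ f]) auto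
qed

theorem theorem3p4:
  fixes scale :: "'k::field_char_0 \<Rightarrow> 'a::ab_group_add \<Rightarrow> 'a"
    and mu :: "'a list \<Rightarrow> 'a" and alpha :: "nat \<Rightarrow> 'a \<Rightarrow> 'a"
    and n :: nat and a :: 'a
  assumes "n \<ge> 3"
    and "totally_hom_assoc_algebra scale n mu alpha"
    and "alpha (n-1) a = a"
    and "\<forall>xs y. length xs = n - 2 \<longrightarrow> mu (xs @ [y, a]) = mu (xs @ [a, y])"
  shows "totally_hom_assoc_algebra scale (n-1) (\<lambda>xs. mu (xs @ [a])) alpha
         \<and> (multiplicative n mu alpha \<longrightarrow> multiplicative (n-1) (\<lambda>xs. mu (xs @ [a])) alpha)"
proof -
  obtain k where n: "n = Suc (Suc k)"
    using \<open>n \<ge> 3\<close> by (intro that[of "n - 2"]) auto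
  have alg: "hom_algebra scale (Suc (Suc k)) mu alpha"
    and assoc: "totally_hom_assoc (Suc (Suc k)) mu alpha"
    using assms(2) unfolding n totally_hom_assoc_algebra_def by simp_all
  have fix_a: "alpha (Suc k) a = a" using assms(3) unfolding n by simp
  have swap: "\<forall>xs y. length xs = k \<longrightarrow> mu (xs @ [y, a]) = mu (xs @ [a, y])"
    using assms(4) unfolding n by simp
  have "totally_hom_assoc_algebra scale (Suc k) (\<lambda>xs. mu (xs @ [a])) alpha"
    unfolding totally_hom_assoc_algebra_def
    using hom_algebra_append_const[OF alg] totally_hom_assoc_append_fixed[OF assoc fix_a swap] ..
  moreover have "multiplicative (Suc k) (\<lambda>xs. mu (xs @ [a])) alpha"
    if "multiplicative n mu alpha"
    using multiplicative_append_fixed[OF that[unfolded n] _ fix_a] by simp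
  ultimately show ?thesis unfolding n by simp
qed

end
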